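(* Let $G$ be the toroidal $L$-grid, let $r$ be a positive integer with $r\le L-2$, and let $\mathscr{S}$ be the block system consisting of all $r\times r$ subgrids of $G$. Then $\mu^+(\mathscr{S})\le 2+\frac2r$.
   Context: The toroidal $L$-grid has vertex set $(\mathbb{Z}/L\mathbb{Z})^2$, with $(a,b)\sim(c,d)$ iff ($a-c=\pm1$ and $b=d$) or ($b-d=\pm1$ and $a=c$) in $\mathbb{Z}/L\mathbb{Z}$. An $r\times r$ subgrid is a set $\{(a+i,b+j):0\le i,j\le r-1\}$. Potts configurations: $\sigma\in\Omega=[q]^V$, $q$ a positive integer. For $S\subseteq V$, $\partial S$ is the set of vertices outside $S$ with a neighbour in $S$. For $X\in\Omega$, $c\in[q]^S$: $X^{(S,c)}$ equals $c$ on $S$ and $X$ off $S$; $\mu_{X,S}(c)$ is the number of monochromatic edges of $X^{(S,c)}$ incident with at least one vertex of $S$. A colour used by $c$ is free with respect to $X,S$ if it does not occur among $\{X(u):u\in\partial S\}$; $f(X,S,c)$ is the number of free colours used by $c$. $\mu^+_{X,S,f}=\max\{\mu_{X,S}(c)/(|S|-f): c\in[q]^S,\ f(X,S,c)=f\}$ (empty maximum $=0$), and $\mu^+(\mathscr{S})=\max_{S\in\mathscr{S}}\max_{X\in\Omega}\max_{f\in\{0,\dots,|S|-1\}}\mu^+_{X,S,f}$. *)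

theory Defs
  imports Complex_Main "HOL-Library.FuncSet"
begin

type_synonym vtx = "nat \<times> nat"

definition grid_V :: "nat \<Rightarrow> vtx set" where
  "grid_V L = {0..<L} \<times> {0..<L}"

definition cyc_adj :: "nat \<Rightarrow> nat \<Rightarrow> nat \<Rightarrow> bool" where
  "cyc_adj L a c \<longleftrightarrow> (int a - int c - 1) mod int L = 0 \<or> (int a - int c + 1) mod int L = 0"

definition grid_adj :: "nat \<Rightarrow> vtx \<Rightarrow> vtx \<Rightarrow> bool" where
  "grid_adj L u v \<longleftrightarrow> u \<in> grid_V L \<and> v \<in> grid_V L \<and>
     ((cyc_adj L (fst u) (fst v) \<and> snd u = snd v) \<or> (cyc_adj L (snd u) (snd v) \<and> fst u = fst v))"

definition grid_edges :: "nat \<Rightarrow> vtx set set" where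
  "grid_edges L = {{u, v} | u v. grid_adj L u v}"

definition subgrid :: "nat \<Rightarrow> nat \<Rightarrow> nat \<Rightarrow> nat \<Rightarrow> vtx set" where
  "subgrid L r a b = {((a + i) mod L, (b + j) mod L) | i j. i < r \<and> j < r}"

definition subgrid_system :: "nat \<Rightarrow> nat \<Rightarrow> vtx set set" where
  "subgrid_system L r = {subgrid L r a b | a b. a < L \<and> b < L}"

definition configs :: "nat \<Rightarrow> nat \<Rightarrow> (vtx \<Rightarrow> nat) set" where
  "configs L q = grid_V L \<rightarrow>\<^sub>E {..<q}"

definition boundary :: "nat \<Rightarrow> vtx set \<Rightarrow> vtx set" where
  "boundary L S = {v \<in> grid_V L - S. \<exists>u\<in>S. grid_adj L u v}"

definition override :: "(vtx \<Rightarrow> nat) \<Rightarrow> vtx set \<Rightarrow> (vtx \<Rightarrow> nat) \<Rightarrow> (vtx \<Rightarrow> nat)" where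
  "override X S c = (\<lambda>v. if v \<in> S then c v else X v)"

definition mu :: "nat \<Rightarrow> (vtx \<Rightarrow> nat) \<Rightarrow> vtx set \<Rightarrow> (vtx \<Rightarrow> nat) \<Rightarrow> nat" where
  "mu L X S c = card {e \<in> grid_edges L. card (override X S c ` e) = 1 \<and> e \<inter> S \<noteq> {}}"

definition free_count :: "nat \<Rightarrow> (vtx \<Rightarrow> nat) \<Rightarrow> vtx set \<Rightarrow> (vtx \<Rightarrow> nat) \<Rightarrow> nat" where
  "free_count L X S c = card (c ` S - X ` boundary L S)"

definition mu_plus_XSf :: "nat \<Rightarrow> nat \<Rightarrow> (vtx \<Rightarrow> nat) \<Rightarrow> vtx set \<Rightarrow> nat \<Rightarrow> real" where
  "mu_plus_XSf L q X S f =
     (let C = {c \<in> S \<rightarrow>\<^sub>E {..<q}. free_count L X S c = f} in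
      if C = {} then 0 else Max ((\<lambda>c. real (mu L X S c) / real (card S - f)) ` C))"

definition mu_plus :: "nat \<Rightarrow> nat \<Rightarrow> vtx set set \<Rightarrow> real" where
  "mu_plus L q SS = Max {mu_plus_XSf L q X S f | S X f. S \<in> SS \<and> X \<in> configs L q \<and> f < card S}"

end

theory Submission
  imports Defs "HOL-Number_Theory.Cong"
begin

text \<open>Fix a block \<open>S\<close> and let \<open>Y\<close> be \<open>X\<close> recoloured by \<open>c\<close> on \<open>S\<close>. Each of the \<open>r\<close> rows and
  \<open>r\<close> columns of \<open>S\<close>, extended by one vertex of \<open>\<partial>S\<close> at either end, is a path with \<open>r + 1\<close>
  steps, and these \<open>2r(r + 1)\<close> steps contain every edge meeting \<open>S\<close>. The ends of such a path carry
  no free colour, so after the last occurrence of each free colour on the path the colour changes,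
  and one more change precedes its first free vertex. A path shows at most \<open>r\<close> colours inside
  \<open>S\<close>, hence it has at least \<open>(1 + 1/r)\<close> times as many changes as free colours. Every free colour
  occurs on some row and on some column, so at least \<open>2(1 + 1/r) f\<close> steps are not monochromatic
  and \<open>\<mu> \<le> 2r(r + 1) - 2(r + 1) f / r = (2 + 2/r)(r\<^sup>2 - f)\<close>.\<close>

definition changes :: "(nat \<Rightarrow> 'a) \<Rightarrow> nat \<Rightarrow> nat" where
  "changes w r = card {q \<in> {0..r}. w q \<noteq> w (Suc q)}"

lemma card_letters_less_changes:
  assumes ends: "w 0 \<notin> F" "w (Suc r) \<notin> F" and occurs: "F \<inter> w ` {1..r} \<noteq> {}"
  shows "card (F \<inter> w ` {1..r}) < changes w r"
proof -
  define K where "K = F \<inter> w ` {1..r}"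
  define Ch where "Ch = {q \<in> {0..r}. w q \<noteq> w (Suc q)}"
  define last where "last k = Max {q \<in> {1..r}. w q = k}" for k
  define first where "first = Min {q \<in> {1..r}. w q \<in> F}"
  have last: "last k \<in> Ch \<and> w (last k) = k" if "k \<in> K" for k
  proof -
    have ne: "{q \<in> {1..r}. w q = k} \<noteq> {}" using that unfolding K_def by auto
    have in_set: "last k \<in> {q \<in> {1..r}. w q = k}"
      unfolding last_def by (rule Max_in[OF _ ne]) simp
    have "w (Suc (last k)) \<noteq> k"
    proof
      assume "w (Suc (last k)) = k"
      moreover have "Suc (last k) \<notin> {q \<in> {1..r}. w q = k}"
        unfolding last_def using Max_ge[of "{q \<in> {1..r}. w q = k}"] by fastforce
      ultimately have "last k = r" using in_set by auto
      with \<open>w (Suc (last k)) = k\<close> show False using ends(2) that unfolding K_def by auto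
    qed
    then show ?thesis using in_set unfolding Ch_def by auto
  qed
  have ne: "{q \<in> {1..r}. w q \<in> F} \<noteq> {}" using occurs by auto
  have first: "first \<in> {q \<in> {1..r}. w q \<in> F}"
    unfolding first_def by (rule Min_in[OF _ ne]) simp
  have before_first: "w (first - 1) \<notin> F"
  proof
    assume "w (first - 1) \<in> F"
    moreover have "first - 1 \<notin> {q \<in> {1..r}. w q \<in> F}"
    proof
      assume "first - 1 \<in> {q \<in> {1..r}. w q \<in> F}"
      then have "first \<le> first - 1" unfolding first_def by (intro Min_le) auto
      then show False using first by auto
    qed
    ultimately have "first = 1" using first by auto
    with \<open>w (first - 1) \<in> F\<close> show False using ends(1) by simp
  qed
  have first_change: "first - 1 \<in> Ch" using first before_first unfolding Ch_def by auto
  have distinct: "first - 1 \<notin> last ` K" using before_first last unfolding K_def by fastforce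
  have "inj_on last K" by (metis inj_onI last)
  then have "card (insert (first - 1) (last ` K)) = card K + 1"
    using distinct by (simp add: K_def card_image)
  moreover have "card (insert (first - 1) (last ` K)) \<le> card Ch"
    using first_change last by (intro card_mono) (auto simp: Ch_def)
  ultimately have "card K + 1 \<le> card Ch" by simp
  then show ?thesis unfolding K_def Ch_def changes_def by simp
qed

lemma row_free_letters_le_changes:
  assumes "w 0 \<notin> F" "w (Suc r) \<notin> F"
  shows "(r + 1) * card (F \<inter> w ` {1..r}) \<le> r * changes w r"
proof (cases "F \<inter> w ` {1..r} = {}")
  case False
  have "card (F \<inter> w ` {1..r}) \<le> card (w ` {1..r})" by (rule card_mono) auto
  also have "\<dots> \<le> r" using card_image_le[of "{1..r}" w] by simp
  finally have "(r + 1) * card (F \<inter> w ` {1..r}) \<le> r * (card (F \<inter> w ` {1..r}) + 1)"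
    by simp
  also have "\<dots> \<le> r * changes w r"
    using card_letters_less_changes[OF assms False] by (intro mult_le_mono2) simp
  finally show ?thesis .
qed simp

lemma free_letters_le_changes:
  assumes "\<And>p. p \<in> {1..r} \<Longrightarrow> g p 0 \<notin> F \<and> g p (Suc r) \<notin> F"
    and "F \<subseteq> (\<Union>p\<in>{1..r}. g p ` {1..r})"
  shows "(r + 1) * card F \<le> r * (\<Sum>p\<in>{1..r}. changes (g p) r)"
proof -
  have "F = (\<Union>p\<in>{1..r}. F \<inter> g p ` {1..r})" using assms(2) by blast
  then have "card F \<le> (\<Sum>p\<in>{1..r}. card (F \<inter> g p ` {1..r}))"
    by (metis card_UN_le finite_atLeastAtMost)
  then have "(r + 1) * card F \<le> (r + 1) * (\<Sum>p\<in>{1..r}. card (F \<inter> g p ` {1..r}))"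
    by (rule mult_le_mono2)
  also have "\<dots> = (\<Sum>p\<in>{1..r}. (r + 1) * card (F \<inter> g p ` {1..r}))"
    by (rule sum_distrib_left)
  also have "\<dots> \<le> (\<Sum>p\<in>{1..r}. r * changes (g p) r)"
    by (rule sum_mono) (use row_free_letters_le_changes assms(1) in blast)
  finally show ?thesis by (simp add: sum_distrib_left)
qed

lemma card_constant_steps_add_changes:
  "card {(p, q) \<in> {1..r} \<times> {0..r}. g p q = g p (Suc q)} + (\<Sum>p\<in>{1..r}. changes (g p) r)
     = r * (r + 1)"
proof -
  let ?E = "{(p, q) \<in> {1..r} \<times> {0..r}. g p q = g p (Suc q)}"
  let ?C = "SIGMA p:{1..r}. {q \<in> {0..r}. g p q \<noteq> g p (Suc q)}"
  have "(\<Sum>p\<in>{1..r}. changes (g p) r) = card ?C" by (simp add: changes_def)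
  moreover have "card ?E + card ?C = card ({1..r} \<times> {0..r})"
  proof -
    have fin: "finite ({1..r} \<times> {0..r})" by simp
    have "?E \<union> ?C = {1..r} \<times> {0..r}" "?E \<inter> ?C = {}" by auto
    moreover have "finite ?E" "finite ?C" by (auto intro: finite_subset[OF _ fin])
    ultimately show ?thesis using card_Un_disjoint[of ?E ?C] by simp
  qed
  ultimately show ?thesis by simp
qed

lemma mod_add_left_cancel_less:
  fixes x p p' L :: nat
  assumes "(x + p) mod L = (x + p') mod L" "p < L" "p' < L"
  shows "p = p'"
  using cong_add_lcancel_nat[of x p p' L] assms by (simp add: cong_def)

lemma cyc_adj_sym: "cyc_adj L x y \<Longrightarrow> cyc_adj L y x"
proof -
  have a: "int y - int x + 1 = - (int x - int y - 1)" "int y - int x - 1 = - (int x - int y + 1)"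
    by auto
  assume "cyc_adj L x y"
  then have "int L dvd (int x - int y - 1) \<or> int L dvd (int x - int y + 1)"
    unfolding cyc_adj_def by (auto simp: mod_eq_0_iff_dvd)
  then have "int L dvd (int y - int x + 1) \<or> int L dvd (int y - int x - 1)"
    unfolding a by (simp only: dvd_minus_iff)
  then show "cyc_adj L y x" unfolding cyc_adj_def by (auto simp: mod_eq_0_iff_dvd)
qed

lemma cyc_adj_mod_Suc: "cyc_adj L (n mod L) (Suc n mod L)"
proof -
  have e1: "int (Suc n) = int L * int (Suc n div L) + int (Suc n mod L)"
    by (metis div_mult_mod_eq of_nat_add of_nat_mult mult.commute)
  have e2: "int n = int L * int (n div L) + int (n mod L)"
    by (metis div_mult_mod_eq of_nat_add of_nat_mult mult.commute)
  have "int (Suc n mod L) - int (n mod L) - 1 = int L * (int (n div L) - int (Suc n div L))"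
    using e1 e2 by (simp add: right_diff_distrib)
  then have "cyc_adj L (Suc n mod L) (n mod L)" by (simp add: cyc_adj_def)
  then show ?thesis by (rule cyc_adj_sym)
qed

lemma cyc_adj_mod_cases:
  assumes "cyc_adj L (m mod L) y" "y < L"
  shows "y = Suc m mod L \<or> y = (m + L - 1) mod L"
proof -
  have L_pos: "0 < L" using assms(2) by simp
  have m_mod: "int L dvd (int m - int (m mod L))"
    by (metis dvd_minus_mod of_nat_mod zmod_int)
  have y_mod: "int y = int y mod int L" using assms(2) by simp
  from assms(1) consider "int L dvd (int (m mod L) - int y - 1)" | "int L dvd (int (m mod L) - int y + 1)"
    unfolding cyc_adj_def by (auto simp: mod_eq_0_iff_dvd)
  then show ?thesis
  proof cases
    case 1
    have "int y - (int m + int L - 1) = - (int (m mod L) - int y - 1) - (int m - int (m mod L)) - int L"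
      by simp
    then have "int L dvd (int y - (int m + int L - 1))"
      using 1 m_mod by (metis dvd_diff dvd_minus_iff dvd_refl)
    then have "int y mod int L = (int m + int L - 1) mod int L" by (simp add: mod_eq_dvd_iff)
    then have "int y = int ((m + L - 1) mod L)" using y_mod L_pos by (simp add: zmod_int of_nat_diff)
    then show ?thesis by simp
  next
    case 2
    have "int y - (int m + 1) = - (int (m mod L) - int y + 1) - (int m - int (m mod L))" by simp
    then have "int L dvd (int y - (int m + 1))" using 2 m_mod by (metis dvd_diff dvd_minus_iff)
    then have "int y mod int L = (int m + 1) mod int L" by (simp add: mod_eq_dvd_iff)
    then have "int y = int (Suc m mod L)" using y_mod by (simp add: zmod_int add.commute)
    then show ?thesis by simp
  qed
qed

lemma grid_adj_sym: "grid_adj L u v \<Longrightarrow> grid_adj L v u"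
  unfolding grid_adj_def using cyc_adj_sym[of L "fst u" "fst v"] cyc_adj_sym[of L "snd u" "snd v"]
  by auto

text \<open>Coordinates relative to a block with corner (a,b): the block occupies \<open>{1..r} \<times> {1..r}\<close>,
  and rows and columns \<open>0\<close> and \<open>r + 1\<close> form its boundary. The offset \<open>L - 1\<close> avoids
  truncated subtraction at coordinate \<open>0\<close>.\<close>
definition window :: "nat \<Rightarrow> nat \<Rightarrow> nat \<Rightarrow> nat \<Rightarrow> nat \<Rightarrow> vtx" where
  "window L a b p q = ((a + L - 1 + p) mod L, (b + L - 1 + q) mod L)"

locale subgrid_block =
  fixes L r a b :: nat
  assumes r_pos: "1 \<le> r" and block_fits: "r + 2 \<le> L"
begin

abbreviation "pt \<equiv> window L a b"
abbreviation "S \<equiv> subgrid L r a b"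

lemma L_pos: "0 < L"
  using block_fits by simp

lemma window_offset: "1 \<le> p \<Longrightarrow> (x + L - 1 + p) mod L = (x + (p - 1)) mod L"
proof -
  assume "1 \<le> p"
  then have "x + L - 1 + p = x + (p - 1) + L" using L_pos by simp
  then show ?thesis by simp
qed

lemma subgrid_eq_window_image: "S = (\<lambda>(p, q). pt p q) ` ({1..r} \<times> {1..r})"
proof -
  have "pt (Suc i) (Suc j) = ((a + i) mod L, (b + j) mod L)" for i j
    unfolding window_def using window_offset[of "Suc i" a] window_offset[of "Suc j" b] by simp
  then have "S = (\<lambda>(i, j). pt (Suc i) (Suc j)) ` ({..<r} \<times> {..<r})"
    unfolding subgrid_def by auto
  also have "\<dots> = (\<lambda>(p, q). pt p q) ` (Suc ` {..<r} \<times> Suc ` {..<r})"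
    by force
  finally show ?thesis by (simp add: image_Suc_lessThan)
qed

lemma window_inj:
  "pt p q = pt p' q' \<Longrightarrow> p \<le> Suc r \<Longrightarrow> p' \<le> Suc r \<Longrightarrow> q \<le> Suc r \<Longrightarrow> q' \<le> Suc r
   \<Longrightarrow> p = p' \<and> q = q'"
  unfolding window_def using block_fits
    mod_add_left_cancel_less[of "a + L - 1" p L p'] mod_add_left_cancel_less[of "b + L - 1" q L q']
  by auto

lemma card_subgrid: "card S = r * r"
proof -
  have "inj_on (\<lambda>(p, q). pt p q) ({1..r} \<times> {1..r})"
    by (rule inj_onI) (use window_inj in fastforce)
  then show ?thesis unfolding subgrid_eq_window_image by (simp add: card_image)
qed

lemma window_in_grid_V: "pt p q \<in> grid_V L"
  unfolding window_def grid_V_def using L_pos by auto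

lemma window_in_subgrid_iff:
  assumes "p \<le> Suc r" "q \<le> Suc r"
  shows "pt p q \<in> S \<longleftrightarrow> p \<in> {1..r} \<and> q \<in> {1..r}"
proof
  assume "pt p q \<in> S"
  then obtain p' q' where "pt p q = pt p' q'" "p' \<in> {1..r}" "q' \<in> {1..r}"
    unfolding subgrid_eq_window_image by auto
  then show "p \<in> {1..r} \<and> q \<in> {1..r}" using window_inj[of p q p' q'] assms by auto
qed (auto simp: subgrid_eq_window_image)

lemma grid_adj_window_Suc_col: "grid_adj L (pt p q) (pt p (Suc q))"
  using window_in_grid_V[of p q] window_in_grid_V[of p "Suc q"] cyc_adj_mod_Suc[of L "b + L - 1 + q"]
  unfolding grid_adj_def window_def by simp

lemma grid_adj_window_Suc_row: "grid_adj L (pt p q) (pt (Suc p) q)"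
  using window_in_grid_V[of p q] window_in_grid_V[of "Suc p" q] cyc_adj_mod_Suc[of L "a + L - 1 + p"]
  unfolding grid_adj_def window_def by simp

lemma window_in_boundary:
  assumes "grid_adj L u (pt p q)" "u \<in> S" "p \<le> Suc r" "q \<le> Suc r" "p \<notin> {1..r} \<or> q \<notin> {1..r}"
  shows "pt p q \<in> boundary L S"
  using assms window_in_subgrid_iff[of p q] window_in_grid_V unfolding boundary_def by auto

lemma window_frame_in_boundary:
  assumes "p \<in> {1..r}"
  shows "pt p 0 \<in> boundary L S" "pt p (Suc r) \<in> boundary L S"
    and "pt 0 p \<in> boundary L S" "pt (Suc r) p \<in> boundary L S"
proof -
  have in_S: "pt p 1 \<in> S" "pt p r \<in> S" "pt 1 p \<in> S" "pt r p \<in> S"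
    using assms r_pos window_in_subgrid_iff by auto
  show "pt p 0 \<in> boundary L S"
    by (rule window_in_boundary[OF grid_adj_sym[OF grid_adj_window_Suc_col] in_S(1)[unfolded One_nat_def]])
      (use assms in auto)
  show "pt p (Suc r) \<in> boundary L S"
    by (rule window_in_boundary[OF grid_adj_window_Suc_col in_S(2)]) (use assms in auto)
  show "pt 0 p \<in> boundary L S"
    by (rule window_in_boundary[OF grid_adj_sym[OF grid_adj_window_Suc_row] in_S(3)[unfolded One_nat_def]])
      (use assms in auto)
  show "pt (Suc r) p \<in> boundary L S"
    by (rule window_in_boundary[OF grid_adj_window_Suc_row in_S(4)]) (use assms in auto)
qed

lemma window_nbr_cases:
  assumes "p \<in> {1..r}" "q \<in> {1..r}" "grid_adj L (pt p q) v"
  shows "v = pt (Suc p) q \<or> v = pt (p - 1) q \<or> v = pt p (Suc q) \<or> v = pt p (q - 1)"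
proof -
  obtain v1 v2 where v: "v = (v1, v2)" "v1 < L" "v2 < L"
    using assms(3) unfolding grid_adj_def grid_V_def by (cases v) auto
  have pred: "(x + L - 1 + n + L - 1) mod L = (x + L - 1 + (n - 1)) mod L" if "1 \<le> n" for x n
  proof -
    have "x + L - 1 + n + L - 1 = x + L - 1 + (n - 1) + L" using that L_pos by simp
    then show ?thesis by simp
  qed
  from assms(3) consider
      "cyc_adj L ((a + L - 1 + p) mod L) v1" "v2 = (b + L - 1 + q) mod L"
    | "cyc_adj L ((b + L - 1 + q) mod L) v2" "v1 = (a + L - 1 + p) mod L"
    unfolding grid_adj_def v window_def by auto
  then show ?thesis
  proof cases
    case 1
    then show ?thesis
      using cyc_adj_mod_cases[OF 1(1) v(2)] pred[of p a] assms(1) unfolding v window_def by auto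
  next
    case 2
    then show ?thesis
      using cyc_adj_mod_cases[OF 2(1) v(3)] pred[of q b] assms(2) unfolding v window_def by auto
  qed
qed

lemma edge_meeting_subgrid_cases:
  assumes "e \<in> grid_edges L" "e \<inter> S \<noteq> {}"
  obtains (row) p q where "p \<in> {1..r}" "q \<in> {0..r}" "e = {pt p q, pt p (Suc q)}"
    | (col) p q where "q \<in> {1..r}" "p \<in> {0..r}" "e = {pt p q, pt (Suc p) q}"
proof -
  obtain x y where xy: "e = {x, y}" "grid_adj L x y"
    using assms(1) unfolding grid_edges_def by blast
  have "\<exists>u v. e = {u, v} \<and> u \<in> S \<and> grid_adj L u v"
  proof (cases "x \<in> S")
    case False
    then have "y \<in> S" using xy(1) assms(2) by auto
    then show ?thesis using xy grid_adj_sym by (metis insert_commute)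
  qed (use xy in blast)
  then obtain u v where e: "e = {u, v}" "u \<in> S" "grid_adj L u v" by blast
  obtain p q where u: "u = pt p q" "p \<in> {1..r}" "q \<in> {1..r}"
    using e(2) unfolding subgrid_eq_window_image by auto
  from window_nbr_cases[OF u(2,3) e(3)[unfolded u(1)]]
  consider "v = pt (Suc p) q" | "v = pt (p - 1) q" | "v = pt p (Suc q)" | "v = pt p (q - 1)"
    by blast
  then show thesis
  proof cases
    case 1
    then show thesis using that(2)[of q p] u e(1) by auto
  next
    case 2
    then show thesis using that(2)[of q "p - 1"] u e(1) by (auto simp: insert_commute)
  next
    case 3
    then show thesis using that(1)[of p q] u e(1) by auto
  next
    case 4
    then show thesis using that(1)[of p "q - 1"] u e(1) by (auto simp: insert_commute)
  qed
qed

text \<open>Only an inequality: for \<open>L = r + 2\<close> the frame rows \<open>0\<close> and \<open>r + 1\<close> coincide, and so do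
  the frame columns.\<close>
lemma mu_le_constant_steps:
  fixes X c :: "vtx \<Rightarrow> nat"
  defines "Y \<equiv> override X S c"
  shows "mu L X S c \<le> card {(p, q) \<in> {1..r} \<times> {0..r}. Y (pt p q) = Y (pt p (Suc q))}
                       + card {(q, p) \<in> {1..r} \<times> {0..r}. Y (pt p q) = Y (pt (Suc p) q)}"
    (is "_ \<le> card ?H + card ?V")
proof -
  have finite_H: "finite ?H" and finite_V: "finite ?V"
    by (auto intro: finite_subset[of _ "{1..r} \<times> {0..r}"])
  have mono: "Y u = Y v" if "card (Y ` {u, v}) = 1" for u v
    using that by (cases "Y u = Y v") auto
  have "e \<in> (\<lambda>(p, q). {pt p q, pt p (Suc q)}) ` ?H \<union> (\<lambda>(q, p). {pt p q, pt (Suc p) q}) ` ?V"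
    if "e \<in> grid_edges L" "card (Y ` e) = 1" "e \<inter> S \<noteq> {}" for e
    using that(1,3)
  proof (cases rule: edge_meeting_subgrid_cases)
    case (row p q)
    then have "(p, q) \<in> ?H" using mono that(2) by auto
    then show ?thesis using row(3) by (intro UnI1 image_eqI[where x = "(p, q)"]) simp_all
  next
    case (col p q)
    then have "(q, p) \<in> ?V" using mono that(2) by auto
    then show ?thesis using col(3) by (intro UnI2 image_eqI[where x = "(q, p)"]) simp_all
  qed
  then have "mu L X S c \<le> card ((\<lambda>(p, q). {pt p q, pt p (Suc q)}) ` ?H
                                 \<union> (\<lambda>(q, p). {pt p q, pt (Suc p) q}) ` ?V)"
    unfolding mu_def Y_def[symmetric] using finite_H finite_V by (intro card_mono) auto
  also have "\<dots> \<le> card ?H + card ?V"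
    using finite_H finite_V by (intro card_Un_le[THEN order_trans] add_mono card_image_le) auto
  finally show ?thesis .
qed

lemma free_count_le_changes:
  fixes X c :: "vtx \<Rightarrow> nat"
  defines "Y \<equiv> override X S c"
  shows "(r + 1) * free_count L X S c \<le> r * (\<Sum>p\<in>{1..r}. changes (\<lambda>q. Y (pt p q)) r)"
    and "(r + 1) * free_count L X S c \<le> r * (\<Sum>q\<in>{1..r}. changes (\<lambda>p. Y (pt p q)) r)"
proof -
  let ?F = "c ` S - X ` boundary L S"
  have frame: "Y v \<notin> ?F" if "v \<in> boundary L S" for v
    using that unfolding Y_def override_def boundary_def by auto
  have "\<exists>p\<in>{1..r}. \<exists>q\<in>{1..r}. k = Y (pt p q)" if k_free: "k \<in> ?F" for k
  proof -
    obtain p q where pq: "p \<in> {1..r}" "q \<in> {1..r}" "k = c (pt p q)"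
      using k_free unfolding subgrid_eq_window_image by auto
    then have "Y (pt p q) = k" unfolding Y_def override_def using window_in_subgrid_iff by auto
    then show ?thesis using pq(1,2) by blast
  qed
  then have cover: "?F \<subseteq> (\<Union>p\<in>{1..r}. (\<lambda>q. Y (pt p q)) ` {1..r})"
    "?F \<subseteq> (\<Union>q\<in>{1..r}. (\<lambda>p. Y (pt p q)) ` {1..r})"
    by blast+
  have ends: "Y (pt p 0) \<notin> ?F \<and> Y (pt p (Suc r)) \<notin> ?F" "Y (pt 0 p) \<notin> ?F \<and> Y (pt (Suc r) p) \<notin> ?F"
    if "p \<in> {1..r}" for p
    using frame window_frame_in_boundary[OF that] by auto
  show "(r + 1) * free_count L X S c \<le> r * (\<Sum>p\<in>{1..r}. changes (\<lambda>q. Y (pt p q)) r)"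
    unfolding free_count_def by (rule free_letters_le_changes) (use ends(1) cover(1) in auto)
  show "(r + 1) * free_count L X S c \<le> r * (\<Sum>q\<in>{1..r}. changes (\<lambda>p. Y (pt p q)) r)"
    unfolding free_count_def by (rule free_letters_le_changes) (use ends(2) cover(2) in auto)
qed

lemma mu_free_count_bound:
  "r * mu L X S c + 2 * (r + 1) * free_count L X S c \<le> 2 * (r + 1) * (r * r)"
proof -
  define Y where "Y = override X S c"
  let ?H = "card {(p, q) \<in> {1..r} \<times> {0..r}. Y (pt p q) = Y (pt p (Suc q))}"
  let ?V = "card {(q, p) \<in> {1..r} \<times> {0..r}. Y (pt p q) = Y (pt (Suc p) q)}"
  let ?CH = "\<Sum>p\<in>{1..r}. changes (\<lambda>q. Y (pt p q)) r"
  let ?CV = "\<Sum>q\<in>{1..r}. changes (\<lambda>p. Y (pt p q)) r"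
  have mu: "r * mu L X S c \<le> r * ?H + r * ?V"
    using mu_le_constant_steps[of X c] unfolding Y_def by (simp add: add_mult_distrib2[symmetric])
  have rows: "r * ?H + r * ?CH = r * (r * (r + 1))"
    using card_constant_steps_add_changes[of r "\<lambda>p q. Y (pt p q)"] by (metis add_mult_distrib2)
  have cols: "r * ?V + r * ?CV = r * (r * (r + 1))"
    using card_constant_steps_add_changes[of r "\<lambda>q p. Y (pt p q)"] by (metis add_mult_distrib2)
  have "2 * (r + 1) * free_count L X S c \<le> r * ?CH + r * ?CV"
    using free_count_le_changes[of X c] unfolding Y_def by simp
  with mu have "r * mu L X S c + 2 * (r + 1) * free_count L X S c
      \<le> (r * ?H + r * ?CH) + (r * ?V + r * ?CV)" by simp
  also have "\<dots> = 2 * (r + 1) * (r * r)" unfolding rows cols by (simp add: algebra_simps)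
  finally show ?thesis .
qed

lemma mu_ratio_le:
  assumes "free_count L X S c < card S"
  shows "real (mu L X S c) / real (card S - free_count L X S c) \<le> 2 + 2 / real r"
proof -
  let ?m = "mu L X S c" and ?f = "free_count L X S c"
  have f_less: "?f < r * r" using assms card_subgrid by simp
  have "real (r * ?m + 2 * (r + 1) * ?f) \<le> real (2 * (r + 1) * (r * r))"
    using mu_free_count_bound[of X c] by (simp only: of_nat_le_iff)
  then have "real r * real ?m \<le> 2 * (real r + 1) * (real r * real r - real ?f)"
    by (simp add: algebra_simps)
  then have "real ?m \<le> (2 + 2 / real r) * real (r * r - ?f)"
    using r_pos f_less by (simp add: of_nat_diff field_simps)
  moreover have "0 < real (r * r - ?f)" using f_less by (metis of_nat_0_less_iff zero_less_diff)
  ultimately show ?thesis unfolding card_subgrid by (simp only: pos_divide_le_eq mult.commute)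
qed

end

lemma mu_plus_XSf_le:
  assumes "finite S" "0 \<le> B"
    and "\<And>c. free_count L X S c = f \<Longrightarrow> real (mu L X S c) / real (card S - f) \<le> B"
  shows "mu_plus_XSf L q X S f \<le> B"
proof -
  have "finite (S \<rightarrow>\<^sub>E {..<q})" using assms(1) by (simp add: finite_PiE)
  then have "finite {c \<in> S \<rightarrow>\<^sub>E {..<q}. free_count L X S c = f}" by simp
  then show ?thesis using assms(2,3) unfolding mu_plus_XSf_def Let_def by (auto simp: Max_le_iff)
qed

lemma mu_plus_le:
  assumes "finite SS" "\<And>S. S \<in> SS \<Longrightarrow> finite S" "S\<^sub>0 \<in> SS" "S\<^sub>0 \<noteq> {}" "1 \<le> q" "0 \<le> B"
    and "\<And>S X c. S \<in> SS \<Longrightarrow> X \<in> configs L q \<Longrightarrow> free_count L X S c < card S \<Longrightarrow>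
           real (mu L X S c) / real (card S - free_count L X S c) \<le> B"
  shows "mu_plus L q SS \<le> B"
proof -
  let ?M = "{mu_plus_XSf L q X S f | S X f. S \<in> SS \<and> X \<in> configs L q \<and> f < card S}"
  have "finite (configs L q)"
    unfolding configs_def grid_V_def by (intro finite_PiE) auto
  moreover have "?M \<subseteq> (\<lambda>(S, X, f). mu_plus_XSf L q X S f) ` (SIGMA S:SS. configs L q \<times> {..<card S})"
    by force
  ultimately have "finite ?M"
    using assms(1) by (meson finite_SigmaI finite_cartesian_product finite_imageI finite_lessThan finite_subset)
  moreover have "restrict (\<lambda>_. 0) (grid_V L) \<in> configs L q"
    unfolding configs_def using assms(5) by auto
  then have "?M \<noteq> {}" using assms(2-4) by (fastforce simp: card_gt_0_iff)
  moreover have "x \<le> B" if "x \<in> ?M" for x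
    using that assms(2,6,7) by (auto intro!: mu_plus_XSf_le)
  ultimately show ?thesis unfolding mu_plus_def by (simp add: Max_le_iff)
qed

lemma subgrid_system_finite: "finite (subgrid_system L r)"
proof -
  have "subgrid_system L r = (\<lambda>(a, b). subgrid L r a b) ` ({..<L} \<times> {..<L})"
    unfolding subgrid_system_def by auto
  then show ?thesis by simp
qed

theorem lemma2p9:
  fixes L r q :: nat
  assumes "q \<ge> 1" and "r \<ge> 1" and "r + 2 \<le> L"
  shows "mu_plus L q (subgrid_system L r) \<le> 2 + 2 / real r"
proof (rule mu_plus_le)
  have block: "subgrid_block L r"
    using assms by unfold_locales auto
  have card: "card (subgrid L r a b) = r * r" for a b
    using subgrid_block.card_subgrid[OF block] .
  show "subgrid L r 0 0 \<in> subgrid_system L r"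
    using assms unfolding subgrid_system_def by (auto intro!: exI[where x = "0::nat"])
  show "subgrid L r 0 0 \<noteq> {}"
    using card[of 0 0] assms(2) by (intro notI) simp
  show "\<And>S. S \<in> subgrid_system L r \<Longrightarrow> finite S"
    using card assms(2) unfolding subgrid_system_def by (auto intro: card_ge_0_finite)
  show "real (mu L X S c) / real (card S - free_count L X S c) \<le> 2 + 2 / real r"
    if "S \<in> subgrid_system L r" "free_count L X S c < card S" for S X c
    using that subgrid_block.mu_ratio_le[OF block] unfolding subgrid_system_def by auto
qed (use assms subgrid_system_finite in auto)

end
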